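(* In the setting described in the context, for any $n\ge1$, any $1\le k\le n$ and any $\tau\in\mathcal{S}_{n-k}$, the map $P\mapsto L_P$ is constant on $$\mathcal{C}_{n,k}(\tau)=\{P\in\mathcal{C}_{n,k}:\mathcal{I}(\tau)\cap\Delta(P)\neq\emptyset\}.$$
   Context: Standing setup. Let $s,t>0$ with $s+t=1$, and let $\theta\in\mathbb{R}$ with $\inf_{q\in\mathbb{N}}q^{1/s}\|q\theta\|>0$, where $\|x\|$ is the distance from $x$ to the nearest integer. Let $\beta\in(0,1)$, let $A_0$ be a compact interval of length $l>0$, let $R=16\beta^{-4}$, and let $c=\min\{\inf_{q\in\mathbb{N}}q^{1/s}\|q\theta\|,\ \tfrac14 lR^{-1},\ \tfrac18R^{-2-3/t^2}\}$. Rational points are written $P=(p/q,r/q)$ with $q>0$ and $p,q,r$ coprime integers. Let $\mathcal{C}=\{(p/q,r/q)\in\mathbb{Q}^2:|\theta-p/q|<c/q^{1+s}\}$ and $\Delta(P)=\{y\in\mathbb{R}:|y-r/q|<c/q^{1+t}\}$. Non-vertical rational lines are written $L(A,B,C)=\{(x,y):y=(Ax+C)/B\}$ with $A,B,C$ coprime integers, $B>0$. For each $P=(p/q,r/q)\in\mathcal{C}$ fix a line $L_P=L(A_P,B_P,C_P)$ passing through $P$ with $|A_P|\le q^s$ and $B_P\le q^t$ (such a line exists). Let $H_n=4cl^{-1}R^n$ and $\mathcal{C}_n=\{P=(p/q,r/q)\in\mathcal{C}:H_n\le qB_P<H_{n+1}\}$ for $n\ge1$ (these partition $\mathcal{C}$).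 Let $\lambda=3/t^2$, $\mu=1/(t(1+t))$, $\mathcal{C}_{n,1}=\{P\in\mathcal{C}_n:H_{n+1}^{t/(1+t)}R^{-\lambda}\le B_P<H_{n+1}^{t/(1+t)}\}$ and, for $2\le k\le n$, $\mathcal{C}_{n,k}=\{P\in\mathcal{C}_n:H_{n+1}^{t/(1+t)}R^{-\lambda-(k-1)\mu}\le B_P<H_{n+1}^{t/(1+t)}R^{-\lambda-(k-2)\mu}\}$. Let $\mathcal{T}$ be an $[R]$-regular rooted tree with root $\tau_0$ ($[\cdot]$ = integer part), $\mathcal{T}_n$ its vertices of height $n$, and $\tau\prec\tau'$ meaning $\tau'$ is an ancestor of $\tau$ (possibly equal). Fix an injective map $\mathcal{I}$ from $\mathcal{T}$ to closed subintervals of $A_0$ with $|\mathcal{I}(\tau)|=lR^{-n}$ for $\tau\in\mathcal{T}_n$, $\mathcal{I}(\tau)\subset\mathcal{I}(\tau')$ whenever $\tau\prec\tau'$, and such that for each $\tau'$ the intervals $\mathcal{I}(\tau)$ over successors $\tau$ of $\tau'$ have pairwise disjoint interiors and connected union. Define $\mathcal{S}_0=\{\tau_0\}$ and for $n\ge1$, $\mathcal{S}_n=\{\tau:\tau$ is a successor of some vertex in $\mathcal{S}_{n-1}$ and $\mathcal{I}(\tau)\cap\bigcup_{P\in\mathcal{C}_n}\Delta(P)=\emptyset\}$. *)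

theory Defs
  imports "HOL-Analysis.Analysis"
begin

definition nint_dist :: "real \<Rightarrow> real" where
  "nint_dist x = min (frac x) (1 - frac x)"

definition dioph_const :: "real \<Rightarrow> real \<Rightarrow> real" where
  "dioph_const s \<theta> = (INF q\<in>{1::nat..}. real q powr (1/s) * nint_dist (real q * \<theta>))"

definition Rpar :: "real \<Rightarrow> real" where
  "Rpar \<beta> = 16 * \<beta> powr (-4)"

definition cpar :: "real \<Rightarrow> real \<Rightarrow> real \<Rightarrow> real \<Rightarrow> real \<Rightarrow> real" where
  "cpar s t \<theta> l R = min (dioph_const s \<theta>) (min (l / (4 * R)) (R powr (-2 - 3 / t^2) / 8))"

text \<open>A rational point (p/q, r/q) is represented by its unique normalised triple (p,q,r).\<close>
definition rat_point :: "int \<times> int \<times> int \<Rightarrow> bool" where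
  "rat_point P = (case P of (p, q, r) \<Rightarrow> q > 0 \<and> gcd (gcd p q) r = 1)"

definition Ccal :: "real \<Rightarrow> real \<Rightarrow> real \<Rightarrow> (int \<times> int \<times> int) set" where
  "Ccal s \<theta> c = {(p, q, r). rat_point (p, q, r) \<and>
      \<bar>\<theta> - of_int p / of_int q\<bar> < c / of_int q powr (1 + s)}"

definition Delta :: "real \<Rightarrow> real \<Rightarrow> int \<times> int \<times> int \<Rightarrow> real set" where
  "Delta t c P = (case P of (p, q, r) \<Rightarrow>
      {y. \<bar>y - of_int r / of_int q\<bar> < c / of_int q powr (1 + t)})"

text \<open>A non-vertical rational line L(A,B,C) = {(x,y). y = (A x + C)/B}, represented by (A,B,C).\<close>
definition line_ok :: "int \<times> int \<times> int \<Rightarrow> bool" where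
  "line_ok L = (case L of (A, B, C) \<Rightarrow> B > 0 \<and> gcd (gcd A B) C = 1)"

definition on_line :: "int \<times> int \<times> int \<Rightarrow> int \<times> int \<times> int \<Rightarrow> bool" where
  "on_line L P = (case L of (A, B, C) \<Rightarrow> case P of (p, q, r) \<Rightarrow>
      of_int r / of_int q = (of_int A * (of_int p / of_int q) + of_int C) / (of_int B :: real))"

definition Hn :: "real \<Rightarrow> real \<Rightarrow> real \<Rightarrow> nat \<Rightarrow> real" where
  "Hn c l R n = 4 * c * inverse l * R ^ n"

definition Bof :: "int \<times> int \<times> int \<Rightarrow> int" where "Bof L = fst (snd L)"
definition qof :: "int \<times> int \<times> int \<Rightarrow> int" where "qof P = fst (snd P)"

definition Cn :: "real \<Rightarrow> real \<Rightarrow> real \<Rightarrow> real \<Rightarrow> real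
    \<Rightarrow> (int \<times> int \<times> int \<Rightarrow> int \<times> int \<times> int) \<Rightarrow> nat \<Rightarrow> (int \<times> int \<times> int) set" where
  "Cn s \<theta> c l R Lf n = {P \<in> Ccal s \<theta> c.
      Hn c l R n \<le> of_int (qof P * Bof (Lf P)) \<and> of_int (qof P * Bof (Lf P)) < Hn c l R (n + 1)}"

definition Cnk :: "real \<Rightarrow> real \<Rightarrow> real \<Rightarrow> real \<Rightarrow> real \<Rightarrow> real
    \<Rightarrow> (int \<times> int \<times> int \<Rightarrow> int \<times> int \<times> int) \<Rightarrow> nat \<Rightarrow> nat \<Rightarrow> (int \<times> int \<times> int) set" where
  "Cnk s t \<theta> c l R Lf n k =
     (let H = Hn c l R (n + 1) powr (t / (1 + t)); lam = 3 / t^2; \<mu> = 1 / (t * (1 + t)) in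
      if k = 1 then
        {P \<in> Cn s \<theta> c l R Lf n. H * R powr (-lam) \<le> of_int (Bof (Lf P)) \<and> of_int (Bof (Lf P)) < H}
      else
        {P \<in> Cn s \<theta> c l R Lf n. H * R powr (-lam - (real k - 1) * \<mu>) \<le> of_int (Bof (Lf P)) \<and>
            of_int (Bof (Lf P)) < H * R powr (-lam - (real k - 2) * \<mu>)})"

text \<open>The m-regular rooted tree: vertices are lists over {0..<m}, root [], height = length,
  successors of v are v @ [i] (i < m), and v' is an ancestor of v iff v' is a prefix of v.\<close>
definition tree_verts :: "nat \<Rightarrow> nat list set" where
  "tree_verts m = {v. \<forall>x\<in>set v. x < m}"

primrec Sset :: "nat \<Rightarrow> (nat \<Rightarrow> real set) \<Rightarrow> (nat list \<Rightarrow> real set) \<Rightarrow> nat \<Rightarrow> nat list set" where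
  "Sset m U I 0 = {[]}"
| "Sset m U I (Suc n) = {v @ [i] | v i. v \<in> Sset m U I n \<and> i < m \<and> I (v @ [i]) \<inter> U (Suc n) = {}}"

end

theory Submission
  imports Defs
begin

text \<open>
  Let \<open>P, P'\<close> be points of \<open>C_{n,k}\<close> whose intervals \<open>\<Delta>\<close> meet \<open>I(\<tau>)\<close>, with lines
  \<open>(A,B,C)\<close> and \<open>(A',B',C')\<close>, and let \<open>y, y'\<close> be common points. Since \<open>|I(\<tau>)|\<close> is tiny,
  both lines take almost the same value at \<open>\<theta>\<close>.

  For \<open>k = 1\<close> the sizes of \<open>q\<close> and \<open>B\<close> are pinned down so tightly that the integer
  \<open>A p' + C q' - B r'\<close> has absolute value below 1: each point lies on the other's line, and two
  distinct primitive lines share at most one rational point.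

  For \<open>k \<ge> 2\<close> put \<open>a = A B' - A' B\<close>. Then \<open>|a \<theta> + (C B' - C' B)| < 1\<close>, so \<open>a = 0\<close> forces
  \<open>C B' - C' B = 0\<close> and the lines coincide. If \<open>a \<noteq> 0\<close>, the intersection point of
  the two lines has denominator at most \<open>|a|\<close>, belongs to \<open>\<C>\<close>, has \<open>y\<close> in its interval, and
  satisfies \<open>|a|^(1+t) < H_{n-k+1}\<close>; so it lies in a level \<open>C_j\<close> with \<open>j \<le> n - k\<close>, which is
  impossible since \<open>\<tau> \<in> S_{n-k}\<close>.
\<close>

lemma primitive_triple_eqI:
  fixes a b c a' b' c' :: int
  assumes "0 < b" "0 < b'" "gcd (gcd a b) c = 1" "gcd (gcd a' b') c' = 1"
    and "a * b' = a' * b" "c * b' = c' * b"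
  shows "a = a' \<and> b = b' \<and> c = c'"
proof -
  have "gcd (gcd (b' * a) (b' * b)) (b' * c) = b'"
    using assms by (simp add: gcd_mult_left abs_of_pos gcd_mult_distrib_int[symmetric])
  moreover have "gcd (gcd (b * a') (b * b')) (b * c') = b"
    using assms by (simp add: gcd_mult_left abs_of_pos gcd_mult_distrib_int[symmetric])
  ultimately have "b = b'" using assms by (simp add: mult.commute)
  then show ?thesis using assms by auto
qed

lemma primitive_triple_of_quotients:
  fixes X a Y :: int
  assumes "a \<noteq> 0"
  obtains p q r where "q > 0" "gcd (gcd p q) r = 1" "q \<le> \<bar>a\<bar>"
    "real_of_int p / real_of_int q = X / a" "real_of_int r / real_of_int q = Y / a"
proof -
  define g where "g = gcd (gcd X a) Y"
  have g: "g > 0" using assms by (simp add: g_def)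
  have "g dvd X" unfolding g_def by (rule dvd_trans[OF gcd_dvd1 gcd_dvd1])
  then obtain X1 where X1: "X = g * X1" by (elim dvdE)
  have "g dvd a" unfolding g_def by (rule dvd_trans[OF gcd_dvd1 gcd_dvd2])
  then obtain a1 where a1: "a = g * a1" by (elim dvdE)
  have "g dvd Y" unfolding g_def by simp
  then obtain Y1 where Y1: "Y = g * Y1" by (elim dvdE)
  have "g * gcd (gcd X1 a1) Y1 = gcd (gcd (g*X1) (g*a1)) (g*Y1)"
    using g by (simp add: gcd_mult_distrib_int[symmetric])
  also have "\<dots> = g" by (simp only: X1[symmetric] a1[symmetric] Y1[symmetric]) (simp add: g_def)
  finally have coprime: "gcd (gcd X1 a1) Y1 = 1" using g by simp
  have a1_nz: "a1 \<noteq> 0" using assms a1 by auto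
  define \<sigma> where "\<sigma> = sgn a1"
  have \<sigma>: "\<sigma> = 1 \<or> \<sigma> = -1" "\<sigma> * a1 = \<bar>a1\<bar>" using a1_nz by (auto simp: \<sigma>_def sgn_if)
  show ?thesis
  proof (rule that[of "\<sigma> * a1" "\<sigma> * X1" "\<sigma> * Y1"])
    show "\<sigma> * a1 > 0" using \<sigma> a1_nz by simp
    show "gcd (gcd (\<sigma> * X1) (\<sigma> * a1)) (\<sigma> * Y1) = 1" using \<sigma>(1) coprime by auto
    show "\<sigma> * a1 \<le> \<bar>a\<bar>"
      using \<sigma>(2) g a1 mult_right_mono[of 1 g "\<bar>a1\<bar>"] by (simp add: abs_mult)
    show "real_of_int (\<sigma> * X1) / real_of_int (\<sigma> * a1) = X / a"
      and "real_of_int (\<sigma> * Y1) / real_of_int (\<sigma> * a1) = Y / a"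
      using \<sigma>(1) g by (auto simp: X1 a1 Y1)
  qed
qed

lemma primitive_lines_eq_or_points_eq:
  fixes p q r p' q' r' A B C A' B' C' :: int
  assumes q: "q > 0" "q' > 0" and P: "gcd (gcd p q) r = 1" "gcd (gcd p' q') r' = 1"
    and B: "B > 0" "B' > 0" and L: "gcd (gcd A B) C = 1" "gcd (gcd A' B') C' = 1"
    and on_lines: "B*r = A*p + C*q" "B*r' = A*p' + C*q'" "B'*r = A'*p + C'*q" "B'*r' = A'*p' + C'*q'"
  shows "(A, B, C) = (A', B', C') \<or> (p, q, r) = (p', q', r')"
proof (cases "p*q' = p'*q")
  case True
  have "B*(r*q') = (A*p + C*q)*q'" using on_lines(1) by (simp add: mult.assoc)
  also have "\<dots> = A*(p*q') + C*q*q'" by (simp add: algebra_simps)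
  also have "\<dots> = (A*p' + C*q')*q" using True by (simp add: algebra_simps)
  also have "\<dots> = B*(r'*q)" using on_lines(2) by (simp add: mult.assoc)
  finally have "r*q' = r'*q" using B by simp
  with True primitive_triple_eqI[OF q P] show ?thesis by simp
next
  case False
  define a where "a = A*B' - A'*B"
  define b where "b = C*B' - C'*B"
  have "a*p + b*q = B'*(A*p + C*q) - B*(A'*p + C'*q)"
    and "a*p' + b*q' = B'*(A*p' + C*q') - B*(A'*p' + C'*q')"
    unfolding a_def b_def by (simp_all add: algebra_simps)
  then have h: "a*p + b*q = 0" "a*p' + b*q' = 0"
    using on_lines[symmetric] by (simp_all add: mult.left_commute)
  have "a*(p*q' - p'*q) = (a*p + b*q)*q' - (a*p' + b*q')*q"
    and "b*(p*q' - p'*q) = (a*p' + b*q')*p - (a*p + b*q)*p'"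
    by (simp_all add: algebra_simps)
  then have "a*(p*q' - p'*q) = 0" "b*(p*q' - p'*q) = 0" using h by simp_all
  then have "a = 0" "b = 0" using False by simp_all
  then show ?thesis using primitive_triple_eqI[OF B L] unfolding a_def b_def by simp
qed

lemma near_line_value_at_theta:
  fixes q B A C p r y \<theta> c s t :: real
  assumes q: "q > 0" and B: "B > 0"
    and \<theta>: "\<bar>\<theta> - p/q\<bar> < c / q powr (1+s)"
    and on_line: "r/q = (A*(p/q) + C)/B" and A: "\<bar>A\<bar> \<le> q powr s" and Bq: "B \<le> q powr t"
    and y: "\<bar>y - r/q\<bar> < c / q powr (1+t)"
  shows "\<bar>y - (A*\<theta> + C)/B\<bar> < 2*c/(q*B)"
proof -
  have c: "c > 0" using \<theta> q by (smt (verit) divide_nonpos_pos powr_gt_zero)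
  have "(A*\<theta> + C)/B - r/q = A * (\<theta> - p/q) / B"
    using on_line q B by (simp add: field_simps)
  then have "\<bar>(A*\<theta> + C)/B - r/q\<bar> = \<bar>A\<bar> * \<bar>\<theta> - p/q\<bar> / B"
    using B by (simp add: abs_mult)
  also have "\<dots> \<le> q powr s * (c / q powr (1+s)) / B"
    using A \<theta> B by (intro divide_right_mono mult_mono) auto
  also have "\<dots> = c/(q*B)" using q by (simp add: powr_add field_simps)
  finally have "\<bar>(A*\<theta> + C)/B - r/q\<bar> \<le> c/(q*B)" .
  moreover have "c / q powr (1+t) \<le> c/(q*B)"
    using q B Bq c by (simp add: powr_add divide_left_mono mult_left_mono)
  moreover have "2*c/(q*B) = c/(q*B) + c/(q*B)" by simp
  ultimately show ?thesis using y by linarith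
qed

lemma abs_add4_le:
  fixes a b c d :: real
  shows "\<bar>a + b + c + d\<bar> \<le> \<bar>a\<bar> + \<bar>b\<bar> + \<bar>c\<bar> + \<bar>d\<bar>"
  by linarith

lemma line_residual_bound:
  fixes A B C p' q' r' y y' \<theta> c s t q B' M E :: real
  assumes q: "q > 0" "q' > 0" and B: "B > 0" "B' > 0" and s: "0 < s" "s \<le> 1"
    and A: "\<bar>A\<bar> \<le> q powr s" and B'q': "B' \<le> q' powr t"
    and \<theta>: "\<bar>\<theta> - p'/q'\<bar> < c / q' powr (1+s)"
    and y: "\<bar>y - (A*\<theta> + C)/B\<bar> < 2*c/(q*B)"
    and y': "\<bar>y' - r'/q'\<bar> < c / q' powr (1+t)"
    and M: "1 \<le> M" "q \<le> M*q'" "q' \<le> M*q" "B \<le> M*B'"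
    and E: "q'*B*\<bar>y - y'\<bar> \<le> E"
  shows "\<bar>A*p' + C*q' - B*r'\<bar> < 4*c*M + E"
proof -
  have c: "c > 0" using \<theta> q by (smt (verit) divide_nonpos_pos powr_gt_zero)
  have split: "A*p' + C*q' - B*r' = q'*A*(p'/q' - \<theta>) + q'*B*((A*\<theta> + C)/B - y)
      + q'*B*(y - y') + q'*B*(y' - r'/q')"
    using q B by (simp add: field_simps)
  have "(q/q') powr s \<le> M"
  proof (cases "q/q' \<le> 1")
    case True
    then show ?thesis using q s M(1) powr_le1[of s "q/q'"] by simp
  next
    case False
    then have "(q/q') powr s \<le> (q/q') powr 1" using s by (intro powr_mono) auto
    also have "\<dots> = q/q'" using q by simp
    moreover have "q/q' \<le> M" using M q by (simp add: divide_le_eq mult.commute)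
    ultimately show ?thesis by linarith
  qed
  moreover have "q'*\<bar>A\<bar>*\<bar>p'/q' - \<theta>\<bar> \<le> q' * q powr s * (c / (q' * q' powr s))"
    using A \<theta> q by (intro mult_mono) (auto simp: powr_add abs_minus_commute)
  moreover have "q' * q powr s * (c / (q' * q' powr s)) = c * (q/q') powr s"
    using q by (simp add: powr_divide field_simps)
  ultimately have T1: "q'*\<bar>A\<bar>*\<bar>p'/q' - \<theta>\<bar> \<le> c*M"
    using c mult_left_mono[of "(q/q') powr s" M c] by linarith
  have "q'*B*\<bar>(A*\<theta> + C)/B - y\<bar> < q'*B*(2*c/(q*B))"
    using y q B by (intro mult_strict_left_mono) (auto simp: abs_minus_commute)
  also have "\<dots> = 2*c*(q'/q)" using q B by simp
  also have "\<dots> \<le> 2*c*M" using M q c by (simp add: divide_le_eq mult.commute)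
  finally have T2: "q'*B*\<bar>(A*\<theta> + C)/B - y\<bar> < 2*c*M" .
  have "c / q' powr (1+t) \<le> c / (q'*B')"
    using q B B'q' c by (simp add: powr_add divide_left_mono mult_left_mono)
  then have "q'*B*\<bar>y' - r'/q'\<bar> \<le> q'*B*(c / (q'*B'))"
    using y' q B by (intro mult_left_mono) auto
  also have "\<dots> = c*(B/B')" using q B by simp
  also have "\<dots> \<le> c*M" using M B c by (simp add: divide_le_eq mult.commute)
  finally have T4: "q'*B*\<bar>y' - r'/q'\<bar> \<le> c*M" .
  have "\<bar>A*p' + C*q' - B*r'\<bar> \<le> \<bar>q'*A*(p'/q' - \<theta>)\<bar> + \<bar>q'*B*((A*\<theta> + C)/B - y)\<bar>
      + \<bar>q'*B*(y - y')\<bar> + \<bar>q'*B*(y' - r'/q')\<bar>"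
    unfolding split by (rule abs_add4_le)
  also have "\<dots> = q'*\<bar>A\<bar>*\<bar>p'/q' - \<theta>\<bar> + q'*B*\<bar>(A*\<theta> + C)/B - y\<bar>
      + q'*B*\<bar>y - y'\<bar> + q'*B*\<bar>y' - r'/q'\<bar>"
    using q B by (simp add: abs_mult)
  finally show ?thesis using T1 T2 T4 E by linarith
qed

lemma two_lines_det_bound:
  fixes A B C A' B' C' \<theta> y y' d e :: real
  assumes B: "B > 0" "B' > 0"
    and "\<bar>y - (A*\<theta> + C)/B\<bar> < d" "\<bar>y' - (A'*\<theta> + C')/B'\<bar> < d" "\<bar>y - y'\<bar> \<le> e"
  shows "\<bar>(A*B' - A'*B)*\<theta> + (C*B' - C'*B)\<bar> < (2*d + e)*(B*B')"
proof -
  have "(A*B' - A'*B)*\<theta> + (C*B' - C'*B) = ((A*\<theta> + C)/B - (A'*\<theta> + C')/B') * (B*B')"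
    using B by (simp add: field_simps)
  then have "\<bar>(A*B' - A'*B)*\<theta> + (C*B' - C'*B)\<bar> = \<bar>(A*\<theta> + C)/B - (A'*\<theta> + C')/B'\<bar> * (B*B')"
    using B by (simp add: abs_mult)
  also have "\<dots> < (2*d + e)*(B*B')"
    using assms(3-5) B by (intro mult_strict_right_mono) (linarith, simp)
  finally show ?thesis .
qed

lemma line_value_minus_intersection:
  fixes A B C A' B' C' \<theta> :: real
  assumes "B \<noteq> 0" "A*B' - A'*B \<noteq> 0"
  shows "(A*\<theta> + C)/B - (A*C' - A'*C)/(A*B' - A'*B)
           = A/B * (\<theta> + (C*B' - C'*B)/(A*B' - A'*B))"
  using assms by (simp add: field_simps)

lemma coefficient_product_bound:
  fixes q A B B' G R s t w \<mu> :: real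
  assumes q: "q > 0" and G: "G > 0" and R: "R > 0" and st: "s > 0" "s + t = 1"
    and A: "\<bar>A\<bar> \<le> q powr s" and qB: "q * B < G powr (1+t)"
    and B: "G powr t * R powr (-w-\<mu>) \<le> B" and B': "0 \<le> B'" "B' < G powr t * R powr (-w)"
  shows "\<bar>A\<bar> * B' < G * R powr (s*\<mu> - t*w)"
proof -
  let ?L = "G powr t * R powr (-w-\<mu>)"
  have L: "?L > 0" using G R by simp
  have "q * ?L < G powr (1+t)" using qB B q by (smt (verit) mult_left_mono)
  then have "q * R powr (-w-\<mu>) < G" using G by (simp add: powr_add mult_ac)
  moreover have "R powr (-w-\<mu>) * R powr (w+\<mu>) = 1" using R by (simp flip: powr_add)
  ultimately have "q = q * R powr (-w-\<mu>) * R powr (w+\<mu>)" by (simp add: mult.assoc)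
  also have "\<dots> < G * R powr (w+\<mu>)"
    using \<open>q * R powr (-w-\<mu>) < G\<close> R by (intro mult_strict_right_mono) auto
  finally have "q < G * R powr (w+\<mu>)" .
  then have "q powr s < (G * R powr (w+\<mu>)) powr s" using q st by (intro powr_less_mono2) auto
  then have "\<bar>A\<bar> * B' \<le> (G * R powr (w+\<mu>)) powr s * B'" using A B' by (intro mult_right_mono) auto
  also have "\<dots> < (G * R powr (w+\<mu>)) powr s * (G powr t * R powr (-w))"
    using B' G R by (intro mult_strict_left_mono) auto
  also have "\<dots> = G powr (s+t) * R powr (s*(w+\<mu>) - w)"
    using G R by (simp add: powr_mult powr_powr powr_add powr_diff powr_minus field_simps)
  also have "\<dots> = G * R powr (s*\<mu> - t*w)"
  proof -
    have "s*w + t*w = w" using st(2) by (metis distrib_right mult_1)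
    then have "s*(w+\<mu>) - w = s*\<mu> - t*w" by (simp add: distrib_left; linarith)
    then show ?thesis using st(2) G by simp
  qed
  finally show ?thesis .
qed

lemma powr_le_1_div_256:
  fixes R e :: real
  assumes "16 \<le> R" "e \<le> -2"
  shows "R powr e \<le> 1/256"
proof -
  have "R powr e \<le> R powr (-2)" using assms by (intro powr_mono) auto
  also have "\<dots> = 1/R^2" using assms by (simp add: powr_minus_divide powr_numeral)
  also have "\<dots> \<le> 1/16^2" using assms by (intro divide_left_mono power_mono) auto
  finally show ?thesis by simp
qed

lemma det_power_bound_s:
  fixes D G H R Y s t w K :: real
  assumes R: "R \<ge> 16" and G: "G > 0" and H: "H = G powr (1+t)"
    and st: "0 < s" "s \<le> 1" "s + t = 1"
    and D: "0 < D" "D \<le> 2*G" and Y: "0 \<le> Y" "Y \<le> G powr (2*t) * R powr (-2*w)"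
    and w: "K + 4 \<le> 2*w"
  shows "8 * R powr (K+1) * Y * D powr s \<le> H"
proof -
  have "D powr s \<le> (2*G) powr s" using D st by (intro powr_mono2) auto
  also have "\<dots> \<le> 2 * G powr s"
    using G st powr_mono[of s 1 2] by (simp add: powr_mult)
  finally have "Y * D powr s \<le> G powr (2*t) * R powr (-2*w) * (2 * G powr s)"
    using Y by (intro mult_mono) auto
  also have "\<dots> = 2 * H * R powr (-2*w)"
  proof -
    have "2*t + s = 1 + t" using st by simp
    then have "G powr (2*t) * G powr s = H" unfolding H by (metis powr_add)
    then show ?thesis by (simp add: mult_ac)
  qed
  finally have "8 * R powr (K+1) * Y * D powr s \<le> 16 * H * (R powr (K+1) * R powr (-2*w))"
    using R by (simp add: mult_ac)
  also have "\<dots> = 16 * H * R powr (K+1-2*w)" by (simp flip: powr_add)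
  also have "\<dots> \<le> 16 * H * (1/256)"
    using R G H w powr_le_1_div_256[of R "K+1-2*w"] by (intro mult_left_mono) auto
  also have "\<dots> \<le> H" using G H by simp
  finally show ?thesis .
qed

lemma det_power_bounds_t:
  fixes D G H R K \<rho> t :: real
  assumes R: "R \<ge> 16" and K: "K \<ge> 0" and G: "G > 0" and H: "H = G powr (1+t)"
    and t: "0 < t" "t \<le> 1" and \<rho>: "0 < \<rho>" "\<rho> powr (1+t) \<le> R powr (-K-4)"
    and D: "0 < D" "D < 2*G*\<rho>"
  shows "D powr (1+t) < H * R powr (-K)"
    and "4*R * D powr (1+t) \<le> H"
proof -
  have H0: "H > 0" using G H by simp
  have RK: "R powr (-K-4) = R powr (-K) * R powr (-4)" "R * R powr (-K-4) = R powr (-K-3)"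
    using R by (simp flip: powr_add, simp add: powr_mult_base algebra_simps)
  have "D powr (1+t) < (2*G*\<rho>) powr (1+t)" using D t by (intro powr_less_mono2) auto
  also have "\<dots> = 2 powr (1+t) * H * \<rho> powr (1+t)" using G \<rho> H by (simp add: powr_mult)
  also have "\<dots> \<le> 4 * H * R powr (-K-4)"
    using t \<rho> H0 powr_mono[of "1+t" 2 2] by (intro mult_mono) auto
  finally have D1t: "D powr (1+t) < 4 * H * R powr (-K-4)" .
  also have "4 * H * R powr (-K-4) = H * R powr (-K) * (4 * R powr (-4))"
    unfolding RK(1) by (simp add: mult_ac)
  also have "\<dots> \<le> H * R powr (-K) * 1"
    using H0 R powr_le_1_div_256[of R "-4"] by (intro mult_left_mono) auto
  finally show "D powr (1+t) < H * R powr (-K)" by simp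
  have "4*R * D powr (1+t) \<le> 4*R * (4 * H * R powr (-K-4))"
    using D1t R by (intro mult_left_mono) auto
  also have "\<dots> = 16 * H * R powr (-K-3)" unfolding RK(2)[symmetric] by (simp add: mult_ac)
  also have "\<dots> \<le> 16 * H * (1/256)"
    using R K H0 powr_le_1_div_256[of R "-K-3"] by (intro mult_left_mono) auto
  also have "\<dots> \<le> H" using H0 by simp
  finally show "4*R * D powr (1+t) \<le> H" .
qed

lemma det_power_bound_t:
  fixes D G H R K \<rho> X t :: real
  assumes R: "R \<ge> 16" and G: "G > 0" and H: "H = G powr (1+t)"
    and t: "0 < t" "t \<le> 1" and \<rho>: "0 < \<rho>" "\<rho> powr (1+t) \<le> R powr (-K-4)"
    and D: "0 < D" "D < 2*G*\<rho>" and X: "0 \<le> X" "X \<le> G*\<rho>"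
  shows "16 * R powr (K+1) * X * D powr t \<le> H"
proof -
  have H0: "H > 0" using G H by simp
  have "D powr t \<le> (2*G*\<rho>) powr t" using D t by (intro powr_mono2) auto
  also have "\<dots> \<le> 2 * (G powr t * \<rho> powr t)"
    using G \<rho> t powr_mono[of t 1 2] by (simp add: powr_mult)
  finally have "X * D powr t \<le> G*\<rho> * (2 * (G powr t * \<rho> powr t))"
    using X by (intro mult_mono) auto
  also have "\<dots> = 2 * H * \<rho> powr (1+t)" using G \<rho> H by (simp add: powr_add mult_ac)
  also have "\<dots> \<le> 2 * H * R powr (-K-4)" using \<rho> H0 by simp
  finally have "16 * R powr (K+1) * X * D powr t \<le> 32 * H * (R powr (K+1) * R powr (-K-4))"
    using R by (simp add: mult_ac)
  also have "\<dots> = 32 * H * R powr (-3)" by (simp flip: powr_add)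
  also have "\<dots> \<le> 32 * H * (1/256)"
    using R H0 powr_le_1_div_256[of R "-3"] by (intro mult_left_mono) auto
  also have "\<dots> \<le> H" using H0 by simp
  finally show ?thesis .
qed

lemma intersection_estimates:
  fixes a b e A B B' f y \<theta> \<kappa> c s t :: real
  assumes a: "a \<noteq> 0" and B: "B > 0" "B' > 0" and \<kappa>: "\<kappa> \<ge> 0"
    and det: "\<bar>a*\<theta> + b\<bar> < \<kappa> * (B*B')"
    and f: "f - e/a = A/B * (\<theta> + b/a)"
    and y: "\<bar>y - f\<bar> < c / (2 * \<bar>a\<bar> powr (1+t))"
    and bound_s: "\<kappa> * (B*B') * \<bar>a\<bar> powr s \<le> c"
    and bound_t: "\<kappa> * (\<bar>A\<bar>*B') * \<bar>a\<bar> powr t \<le> c/2"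
  shows "\<bar>\<theta> + b/a\<bar> < c / \<bar>a\<bar> powr (1+s)"
    and "\<bar>y - e/a\<bar> < c / \<bar>a\<bar> powr (1+t)"
proof -
  have pow: "\<bar>a\<bar> powr (1+s) = \<bar>a\<bar> * \<bar>a\<bar> powr s" "\<bar>a\<bar> powr (1+t) = \<bar>a\<bar> * \<bar>a\<bar> powr t"
    using a by (simp_all add: powr_add)
  have "\<theta> + b/a = (a*\<theta> + b)/a" using a by (simp add: field_simps)
  then have \<theta>: "\<bar>\<theta> + b/a\<bar> < \<kappa> * (B*B') / \<bar>a\<bar>"
    using det a by (simp add: abs_divide divide_strict_right_mono)
  also have "\<kappa> * (B*B') / \<bar>a\<bar> = \<kappa> * (B*B') * \<bar>a\<bar> powr s / \<bar>a\<bar> powr (1+s)"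
    using a unfolding pow by simp
  also have "\<dots> \<le> c / \<bar>a\<bar> powr (1+s)" using bound_s by (rule divide_right_mono) simp
  finally show "\<bar>\<theta> + b/a\<bar> < c / \<bar>a\<bar> powr (1+s)" .
  have "\<bar>f - e/a\<bar> = \<bar>A\<bar>/B * \<bar>\<theta> + b/a\<bar>" unfolding f using B by (simp add: abs_mult)
  also have "\<dots> \<le> \<bar>A\<bar>/B * (\<kappa> * (B*B') / \<bar>a\<bar>)" using \<theta> B by (intro mult_left_mono) auto
  also have "\<dots> = \<kappa> * (\<bar>A\<bar>*B') / \<bar>a\<bar>" using B by simp
  also have "\<dots> = \<kappa> * (\<bar>A\<bar>*B') * \<bar>a\<bar> powr t / \<bar>a\<bar> powr (1+t)"
    using a unfolding pow by simp
  also have "\<dots> \<le> (c/2) / \<bar>a\<bar> powr (1+t)" using bound_t by (rule divide_right_mono) simp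
  also have "\<dots> = c / (2 * \<bar>a\<bar> powr (1+t))" by simp
  finally show "\<bar>y - e/a\<bar> < c / \<bar>a\<bar> powr (1+t)" using y by linarith
qed

text \<open>
  Two points \<open>(p/q, r/q)\<close>, \<open>(p'/q', r'/q')\<close> of \<open>C_{n,k}\<close>, \<open>k \<ge> 2\<close>, with lines \<open>(A,B,C)\<close>,
  \<open>(A',B',C')\<close> and nearby values \<open>y, y'\<close>, in real-number form: \<open>H = H_{n+1}\<close>,
  \<open>G = H^(1/(1+t))\<close>, \<open>K = k\<close>, and \<open>B, B'\<close> lie in the window \<open>[G^t R^(-w-\<mu>), G^t R^(-w))\<close>
  with \<open>w = \<lambda> + (k-2)\<mu>\<close>.
\<close>
locale close_line_pair =
  fixes q B A C q' B' A' C' y y' \<theta> c s t R H G w \<mu> K :: real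
  assumes q_pos: "q > 0" "q' > 0" and B_pos: "B > 0" "B' > 0" and c_pos: "c > 0"
    and st: "s > 0" "t > 0" "s + t = 1"
    and near: "\<bar>y - (A*\<theta> + C)/B\<bar> < 2*c/(q*B)" "\<bar>y' - (A'*\<theta> + C')/B'\<bar> < 2*c/(q'*B')"
    and A_le: "\<bar>A\<bar> \<le> q powr s" "\<bar>A'\<bar> \<le> q' powr s"
    and close: "\<bar>y - y'\<bar> \<le> 4*c*R powr (K+1)/H"
    and R_ge: "R \<ge> 16" and G_ge: "G \<ge> 1" and H_eq: "H = G powr (1+t)" and K_nonneg: "K \<ge> 0"
    and qB: "H/R \<le> q*B" "q*B < H" "H/R \<le> q'*B'" "q'*B' < H"
    and B_range: "G powr t * R powr (-w-\<mu>) \<le> B" "B < G powr t * R powr (-w)"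
                 "G powr t * R powr (-w-\<mu>) \<le> B'" "B' < G powr t * R powr (-w)"
    and exponents: "(1+t)*(s*\<mu> - t*w) \<le> -K - 4" "K + 4 \<le> 2*w"
    and c_small: "8*c*R^2 \<le> 1"
begin

lemma H_pos: "H > 0"
  using G_ge H_eq by simp

lemma near_scaled: "\<bar>y - (A*\<theta> + C)/B\<bar> < 2*c*R/H" "\<bar>y' - (A'*\<theta> + C')/B'\<bar> < 2*c*R/H"
proof -
  have "2*c/(q*B) \<le> 2*c/(H/R)" "2*c/(q'*B') \<le> 2*c/(H/R)"
    using qB H_pos R_ge c_pos q_pos B_pos by (intro divide_left_mono; simp)+
  then show "\<bar>y - (A*\<theta> + C)/B\<bar> < 2*c*R/H" "\<bar>y' - (A'*\<theta> + C')/B'\<bar> < 2*c*R/H"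
    using near by simp_all
qed

lemma det_bound:
  "\<bar>(A*B' - A'*B)*\<theta> + (C*B' - C'*B)\<bar> < 8*c*R powr (K+1)/H * (B*B')"
proof -
  have "c*R \<le> c*R powr (K+1)"
    using R_ge K_nonneg c_pos powr_mono[of 1 "K+1" R] by (intro mult_left_mono) auto
  then have "(4*(c*R) + 4*c*R powr (K+1))/H \<le> 8*c*R powr (K+1)/H"
    using H_pos by (intro divide_right_mono) auto
  then have "2*(2*c*R/H) + 4*c*R powr (K+1)/H \<le> 8*c*R powr (K+1)/H"
    by (simp add: add_divide_distrib)
  then have "(2*(2*c*R/H) + 4*c*R powr (K+1)/H) * (B*B') \<le> 8*c*R powr (K+1)/H * (B*B')"
    using B_pos by (intro mult_right_mono) auto
  moreover have "\<bar>(A*B' - A'*B)*\<theta> + (C*B' - C'*B)\<bar> < (2*(2*c*R/H) + 4*c*R powr (K+1)/H) * (B*B')"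
    using two_lines_det_bound[OF B_pos near_scaled close] .
  ultimately show ?thesis by linarith
qed

lemma B_product_le: "B*B' \<le> G powr (2*t) * R powr (-2*w)"
proof -
  have "B*B' \<le> (G powr t * R powr (-w)) * (G powr t * R powr (-w))"
    using B_range B_pos by (intro mult_mono) auto
  also have "\<dots> = G powr (2*t) * R powr (-2*w)" by (simp add: mult_ac flip: powr_add)
  finally show ?thesis .
qed

lemma det_lt_1: "\<bar>(A*B' - A'*B)*\<theta> + (C*B' - C'*B)\<bar> < 1"
proof -
  have "G powr (2*t) \<le> H" unfolding H_eq using G_ge st by (intro powr_mono) auto
  then have "G powr (2*t) * R powr (-2*w) \<le> H * R powr (-2*w)" by (intro mult_right_mono) auto
  then have "B*B' \<le> H * R powr (-2*w)" using B_product_le by linarith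
  then have "8*c*R powr (K+1)/H * (B*B') \<le> 8*c*R powr (K+1)/H * (H * R powr (-2*w))"
    using c_pos H_pos by (intro mult_left_mono) auto
  also have "\<dots> = 8*c*R powr (K+1-2*w)" using H_pos by (simp add: powr_diff powr_minus field_simps)
  also have "\<dots> \<le> 8*c*R powr 2"
    using exponents R_ge c_pos by (intro mult_left_mono powr_mono) auto
  also have "\<dots> \<le> 1" using c_small R_ge by (simp add: powr_numeral)
  finally show ?thesis using det_bound by linarith
qed

definition \<rho> :: real where "\<rho> = R powr (s*\<mu> - t*w)"

lemma \<rho>_pos: "\<rho> > 0" and \<rho>_powr: "\<rho> powr (1+t) \<le> R powr (-K-4)" and \<rho>_le_1: "\<rho> \<le> 1"
proof -
  show "\<rho> > 0" unfolding \<rho>_def using R_ge by simp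
  show "\<rho> powr (1+t) \<le> R powr (-K-4)"
    unfolding \<rho>_def using R_ge exponents by (simp add: powr_powr mult.commute)
  have "(1+t)*(s*\<mu> - t*w) < 0" using exponents(1) K_nonneg by linarith
  then have "s*\<mu> - t*w \<le> 0" using st by (simp add: mult_less_0_iff)
  then show "\<rho> \<le> 1" unfolding \<rho>_def using R_ge powr_mono[of "s*\<mu> - t*w" 0 R] by simp
qed

lemma coefficient_products: "\<bar>A\<bar>*B' < G*\<rho>" "\<bar>A'\<bar>*B < G*\<rho>"
proof -
  have "G > 0" "R > 0" using G_ge R_ge by auto
  note bound = coefficient_product_bound[OF _ this st(1,3)]
  show "\<bar>A\<bar>*B' < G*\<rho>" "\<bar>A'\<bar>*B < G*\<rho>"
    unfolding \<rho>_def using bound[OF q_pos(1) A_le(1)] bound[OF q_pos(2) A_le(2)]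
      qB B_range B_pos H_eq by auto
qed

lemma abs_det_lt: "\<bar>A*B' - A'*B\<bar> < 2*G*\<rho>"
proof -
  have "\<bar>A*B' - A'*B\<bar> \<le> \<bar>A\<bar>*B' + \<bar>A'\<bar>*B"
    using B_pos abs_triangle_ineq4[of "A*B'" "A'*B"] by (simp add: abs_mult)
  then show ?thesis using coefficient_products by linarith
qed

lemma intersection_close:
  assumes nz: "A*B' - A'*B \<noteq> 0"
  shows "\<bar>\<theta> + (C*B' - C'*B)/(A*B' - A'*B)\<bar> < c / \<bar>A*B' - A'*B\<bar> powr (1+s)"
    and "\<bar>y - (A*C' - A'*C)/(A*B' - A'*B)\<bar> < c / \<bar>A*B' - A'*B\<bar> powr (1+t)"
    and "\<bar>A*B' - A'*B\<bar> powr (1+t) < H * R powr (-K)"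
proof -
  let ?D = "\<bar>A*B' - A'*B\<bar>" and ?\<kappa> = "8*c*R powr (K+1)/H"
  have D: "0 < ?D" "?D < 2*G*\<rho>" using nz abs_det_lt by auto
  have G: "G > 0" using G_ge by simp
  have t_le_1: "t \<le> 1" using st by simp
  note power_t = det_power_bounds_t[OF R_ge K_nonneg G H_eq st(2) t_le_1 \<rho>_pos \<rho>_powr D]
  show "?D powr (1+t) < H * R powr (-K)" by (rule power_t(1))
  have s_bound: "?\<kappa> * (B*B') * ?D powr s \<le> c"
  proof -
    have "?D \<le> 2*G" using D \<rho>_le_1 G by (smt (verit) mult_left_le)
    moreover have "s \<le> 1" "0 \<le> B*B'" using st B_pos by simp_all
    ultimately have "8 * R powr (K+1) * (B*B') * ?D powr s \<le> H"
      using det_power_bound_s[OF R_ge G H_eq st(1) _ st(3) D(1) _ _ B_product_le exponents(2)]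
      by simp
    then show ?thesis using c_pos H_pos by (simp add: field_simps)
  qed
  have t_bound: "?\<kappa> * (\<bar>A\<bar>*B') * ?D powr t \<le> c/2"
  proof -
    have "16 * R powr (K+1) * (\<bar>A\<bar>*B') * ?D powr t \<le> H"
      using det_power_bound_t[OF R_ge G H_eq st(2) t_le_1 \<rho>_pos \<rho>_powr D]
        coefficient_products(1) B_pos by simp
    then show ?thesis using c_pos H_pos by (simp add: field_simps)
  qed
  have y_bound: "\<bar>y - (A*\<theta> + C)/B\<bar> < c / (2 * ?D powr (1+t))"
  proof -
    have "2*c*R/H \<le> c / (2 * ?D powr (1+t))"
      using power_t(2) st c_pos H_pos D by (simp add: field_simps)
    then show ?thesis using near_scaled(1) by linarith
  qed
  have \<kappa>: "?\<kappa> \<ge> 0" using c_pos H_pos by simp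
  show "\<bar>\<theta> + (C*B' - C'*B)/(A*B' - A'*B)\<bar> < c / ?D powr (1+s)"
    and "\<bar>y - (A*C' - A'*C)/(A*B' - A'*B)\<bar> < c / ?D powr (1+t)"
    using intersection_estimates[OF nz B_pos \<kappa> det_bound
        line_value_minus_intersection[OF _ nz] y_bound s_bound t_bound] B_pos by auto
qed

end

lemma Rpar_ge_16:
  assumes "0 < \<beta>" "\<beta> < 1"
  shows "Rpar \<beta> \<ge> 16"
proof -
  have "\<beta> powr (-4) = inverse (\<beta>^4)" using assms by (simp add: powr_minus powr_numeral)
  moreover have "\<beta>^4 \<le> 1" using assms by (simp add: power_le_one)
  ultimately have "\<beta> powr (-4) \<ge> 1" using assms by (simp add: one_le_inverse)
  then show ?thesis unfolding Rpar_def by simp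
qed

lemma Sset_vertex:
  assumes mono: "\<forall>v \<in> tree_verts m. \<forall>w. v @ w \<in> tree_verts m \<longrightarrow> I (v @ w) \<subseteq> I v"
    and "\<tau> \<in> Sset m U I N"
  shows "\<tau> \<in> tree_verts m" "length \<tau> = N" "\<And>j. j \<in> {1..N} \<Longrightarrow> I \<tau> \<inter> U j = {}"
proof -
  have "\<tau> \<in> tree_verts m \<and> length \<tau> = N \<and> (\<forall>j\<in>{1..N}. I \<tau> \<inter> U j = {})"
    using assms(2)
  proof (induction N arbitrary: \<tau>)
    case 0
    then show ?case by (simp add: tree_verts_def)
  next
    case (Suc N)
    then obtain v i where \<tau>: "\<tau> = v @ [i]" "v \<in> Sset m U I N" "i < m" "I (v @ [i]) \<inter> U (Suc N) = {}"
      by auto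
    with Suc.IH have v: "v \<in> tree_verts m" "length v = N" "\<forall>j\<in>{1..N}. I v \<inter> U j = {}"
      by auto
    have \<tau>_vert: "\<tau> \<in> tree_verts m" using v(1) \<tau>(1,3) by (auto simp: tree_verts_def)
    then have sub: "I \<tau> \<subseteq> I v" using mono v(1) \<tau>(1) by blast
    have "I \<tau> \<inter> U j = {}" if "j \<in> {1..Suc N}" for j
    proof (cases "j = Suc N")
      case True
      then show ?thesis using \<tau>(1,4) by simp
    next
      case False
      then have "I v \<inter> U j = {}" using that v(3) by simp
      then show ?thesis using sub by blast
    qed
    then show ?case using \<tau>(1) v(2) \<tau>_vert by simp
  qed
  then show "\<tau> \<in> tree_verts m" "length \<tau> = N" "\<And>j. j \<in> {1..N} \<Longrightarrow> I \<tau> \<inter> U j = {}"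
    by auto
qed

lemma exists_index_between:
  fixes f :: "nat \<Rightarrow> real"
  assumes "f 1 \<le> x" "x < f (N+1)"
  shows "\<exists>j\<in>{1..N}. f j \<le> x \<and> x < f (j+1)"
  using assms(2)
proof (induction N)
  case 0
  then show ?case using assms(1) by simp
next
  case (Suc N)
  show ?case
  proof (cases "x < f (N+1)")
    case True
    then show ?thesis using Suc.IH by force
  next
    case False
    then show ?thesis using Suc.prems by (intro bexI[of _ "Suc N"]) auto
  qed
qed

lemma level_exponents:
  fixes s t K :: real
  assumes st: "0 < s" "0 < t" "s + t = 1" and K: "2 \<le> K"
  defines "\<mu> \<equiv> 1/(t*(1+t))" and "w \<equiv> 3/t^2 + (K-2) * (1/(t*(1+t)))"
  shows "(1+t)*(s*\<mu> - t*w) \<le> -K - 4" and "K + 4 \<le> 2*w"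
proof -
  have w_def: "w = 3/t^2 + (K-2)*\<mu>" unfolding w_def \<mu>_def ..
  have t1: "t < 1" using st by simp
  have e: "(1+t)*\<mu> = 1/t" "t*(3/t^2) = 3/t" using st unfolding \<mu>_def by (simp_all add: power2_eq_square)
  have "(1+t)*(s*\<mu> - t*w) = s*((1+t)*\<mu>) - (1+t)*(t*(3/t^2)) - (K-2)*(t*((1+t)*\<mu>))"
    unfolding w_def by (simp add: algebra_simps)
  also have "\<dots> = s/t - (1+t)*(3/t) - (K-2)" unfolding e using st by simp
  also have "\<dots> = -2/t - 2 - K" using st by (simp add: field_simps)
  also have "\<dots> \<le> -K - 4" using st t1 by (simp add: field_simps)
  finally show "(1+t)*(s*\<mu> - t*w) \<le> -K - 4" .
  have "t*(1+t) \<le> 2" using st t1 mult_mono[of t 1 "1+t" 2] by simp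
  then have "1 \<le> 2*\<mu>" unfolding \<mu>_def using st by (simp add: divide_simps)
  then have "K - 2 \<le> (K-2)*(2*\<mu>)" using K mult_left_mono[of 1 "2*\<mu>" "K-2"] by simp
  moreover have "3 \<le> 3/t^2" using st t1 by (simp add: field_simps power_le_one)
  ultimately show "K + 4 \<le> 2*w" unfolding w_def by (simp add: algebra_simps)
qed

lemma denominator_ratio_bound:
  fixes q B q' B' H R \<Lambda> :: real
  assumes "0 < q'" "0 < B" "0 < R" "0 \<le> \<Lambda>" "q*B < H" "H/R \<le> q'*B'" "B' \<le> \<Lambda>*B"
  shows "q \<le> R*\<Lambda>*q'"
proof -
  have "q*B < R*(q'*B')" using assms by (simp add: divide_le_eq mult.commute)
  also have "\<dots> \<le> R*(q'*(\<Lambda>*B))" using assms by (intro mult_left_mono) auto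
  finally show ?thesis using assms by (simp add: mult_ac)
qed

lemma Cnk_subset_Cn: "Cnk s t \<theta> c l R Lf n k \<subseteq> Cn s \<theta> c l R Lf n"
  unfolding Cnk_def Let_def by auto

text \<open>The standing setup, keeping only the properties of \<open>c\<close> and \<open>R\<close> that the argument uses.\<close>
locale rational_approx_setting =
  fixes s t \<theta> c l R :: real and Lf :: "int \<times> int \<times> int \<Rightarrow> int \<times> int \<times> int"
  assumes s_pos: "s > 0" and t_pos: "t > 0" and s_plus_t: "s + t = 1"
    and R_ge: "R \<ge> 16" and l_pos: "l > 0" and c_pos: "c > 0"
    and c_le_l: "c \<le> l / (4*R)" and c_le_R: "8*c \<le> R powr (-2 - 3/t^2)"
    and line_choice: "\<forall>P \<in> Ccal s \<theta> c. case P of (p, q, r) \<Rightarrow> case Lf P of (A, B, C) \<Rightarrow>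
          line_ok (A, B, C) \<and> on_line (A, B, C) (p, q, r) \<and>
          real_of_int \<bar>A\<bar> \<le> of_int q powr s \<and> real_of_int B \<le> of_int q powr t"
begin

lemma Ccal_line_data:
  assumes "P \<in> Ccal s \<theta> c" "P = (p, q, r)" "Lf P = (A, B, C)"
  shows "q > 0" "gcd (gcd p q) r = 1" "\<bar>\<theta> - p/q\<bar> < c / q powr (1+s)"
    and "B > 0" "gcd (gcd A B) C = 1" "real_of_int r / q = (A*(p/q) + C)/B"
    and "\<bar>real_of_int A\<bar> \<le> q powr s" "B \<le> q powr t" "B*r = A*p + C*q"
proof -
  show point: "q > 0" "gcd (gcd p q) r = 1" "\<bar>\<theta> - p/q\<bar> < c / q powr (1+s)"
    using assms unfolding Ccal_def rat_point_def by auto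
  show line: "B > 0" "gcd (gcd A B) C = 1" "real_of_int r / q = (A*(p/q) + C)/B"
    "\<bar>real_of_int A\<bar> \<le> q powr s" "B \<le> q powr t"
    using line_choice assms unfolding line_ok_def on_line_def by force+
  have "real_of_int (B*r) = A*p + C*q" using point(1) line(1,3) by (simp add: field_simps)
  then show "B*r = A*p + C*q" by (metis of_int_add of_int_mult of_int_eq_iff)
qed

lemma Hn_eq: "Hn c l R j = 4*c/l * R powr j"
  unfolding Hn_def using R_ge by (simp add: powr_realpow divide_inverse)

lemma Hn_pos: "Hn c l R j > 0"
  unfolding Hn_eq using c_pos l_pos R_ge by simp

lemma Hn_1_le_1: "Hn c l R 1 \<le> 1"
  unfolding Hn_eq using c_le_l l_pos R_ge by (simp add: field_simps)

lemma Hn_shift: "k \<le> n \<Longrightarrow> Hn c l R (n+1) * R powr (-k) = Hn c l R (n-k+1)"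
  unfolding Hn_eq using R_ge by (simp add: mult.assoc of_nat_diff add_diff_eq flip: powr_add)

lemma interval_length:
  assumes "k \<le> n"
  shows "l * R powr (-real (n-k)) = 4*c*R powr (real k + 1) / Hn c l R (n+1)"
proof -
  have "4*c*R powr (real k + 1) / Hn c l R (n+1) = l * (R powr (real k + 1) / R powr (real n + 1))"
    unfolding Hn_eq using c_pos l_pos by (simp add: field_simps)
  also have "R powr (real k + 1) / R powr (real n + 1) = R powr (-real (n-k))"
    using assms R_ge by (simp add: of_nat_diff flip: powr_diff)
  finally show ?thesis by simp
qed

lemma Cn_qB_bounds:
  assumes "P \<in> Cn s \<theta> c l R Lf n"
  shows "Hn c l R (n+1) / R \<le> qof P * Bof (Lf P)" "qof P * Bof (Lf P) < Hn c l R (n+1)"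
proof -
  have "Hn c l R n = Hn c l R (n+1) / R" unfolding Hn_eq using R_ge by (simp add: powr_add)
  then show "Hn c l R (n+1) / R \<le> qof P * Bof (Lf P)" "qof P * Bof (Lf P) < Hn c l R (n+1)"
    using assms unfolding Cn_def by auto
qed

lemma intersection_in_earlier_level:
  fixes a b e :: int
  assumes a: "a \<noteq> 0" and \<theta>: "\<bar>\<theta> + b/a\<bar> < c / \<bar>a\<bar> powr (1+s)"
    and y: "\<bar>y - e/a\<bar> < c / \<bar>a\<bar> powr (1+t)" and a_small: "\<bar>a\<bar> powr (1+t) < Hn c l R (N+1)"
  shows "\<exists>j\<in>{1..N}. \<exists>P\<in>Cn s \<theta> c l R Lf j. y \<in> Delta t c P"
proof -
  obtain p q r where q: "q > 0" "gcd (gcd p q) r = 1" "q \<le> \<bar>a\<bar>"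
    and pq: "real_of_int p / q = real_of_int (-b) / a" and rq: "real_of_int r / q = e/a"
    by (rule primitive_triple_of_quotients[OF a])
  have "c / \<bar>real_of_int a\<bar> powr (1+s) \<le> c / real_of_int q powr (1+s)"
    "c / \<bar>real_of_int a\<bar> powr (1+t) \<le> c / real_of_int q powr (1+t)"
    using q c_pos s_pos t_pos by (intro divide_left_mono powr_mono2 mult_pos_pos; simp)+
  then have P: "(p, q, r) \<in> Ccal s \<theta> c" and y_in: "y \<in> Delta t c (p, q, r)"
    using q \<theta> y pq rq unfolding Ccal_def rat_point_def Delta_def by auto
  obtain A B C where "Lf (p, q, r) = (A, B, C)" by (cases "Lf (p, q, r)")
  with Ccal_line_data[OF P refl this] have L: "Lf (p, q, r) = (A, B, C)" "B > 0" "B \<le> q powr t"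
    by auto
  have "1 \<le> q * B" using q L by (simp add: int_one_le_iff_zero_less)
  then have lower: "Hn c l R 1 \<le> real_of_int (q * B)" using Hn_1_le_1 by linarith
  have "real_of_int (q * B) \<le> q * q powr t" using L q by (simp add: mult_left_mono)
  also have "\<dots> = q powr (1+t)" using q by (simp add: powr_add)
  also have "\<dots> \<le> \<bar>a\<bar> powr (1+t)" using q t_pos by (intro powr_mono2) auto
  finally have "real_of_int (q * B) < Hn c l R (N+1)" using a_small by linarith
  then obtain j where j: "j \<in> {1..N}" "Hn c l R j \<le> real_of_int (q * B)"
    "real_of_int (q * B) < Hn c l R (j+1)"
    using exists_index_between[of "Hn c l R", OF lower] by blast
  then have "(p, q, r) \<in> Cn s \<theta> c l R Lf j" using P L unfolding Cn_def qof_def Bof_def by simp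
  then show ?thesis using j(1) y_in by blast
qed

lemma c_small: "8*c*R^2 * R powr (3/t^2) \<le> 1"
proof -
  have "8*c*R^2 * R powr (3/t^2) \<le> R powr (-2 - 3/t^2) * R powr 2 * R powr (3/t^2)"
    using c_le_R R_ge by (simp add: powr_numeral)
  also have "\<dots> = R powr ((-2 - 3/t^2) + 2 + 3/t^2)" by (simp only: powr_add)
  also have "\<dots> = 1" using R_ge by simp
  finally show ?thesis .
qed

lemma Cnk_1_B_ratio:
  assumes "P \<in> Cnk s t \<theta> c l R Lf n 1" "P' \<in> Cnk s t \<theta> c l R Lf n 1"
  shows "Bof (Lf P) \<le> R powr (3/t^2) * Bof (Lf P')"
proof -
  let ?X = "Hn c l R (n+1) powr (t/(1+t))"
  have "?X * R powr (-(3/t^2)) \<le> Bof (Lf P')" "Bof (Lf P) < ?X"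
    using assms unfolding Cnk_def Let_def by auto
  moreover have "R powr (3/t^2) * (?X * R powr (-(3/t^2))) = ?X"
    using R_ge by (simp add: mult.left_commute flip: powr_add)
  ultimately show ?thesis
    by (smt (verit) mult_left_mono powr_ge_zero)
qed

lemma Cnk_1_scales:
  fixes p q r p' q' r' A B C A' B' C' :: int
  assumes P: "P \<in> Cnk s t \<theta> c l R Lf n 1" "P' \<in> Cnk s t \<theta> c l R Lf n 1"
    and P_eq: "P = (p, q, r)" "P' = (p', q', r')" and L: "Lf P = (A, B, C)" "Lf P' = (A', B', C')"
  shows "q \<le> R * R powr (3/t^2) * q'" "B \<le> R * R powr (3/t^2) * B'"
    and "real_of_int q' * B < R powr (3/t^2) * Hn c l R (n+1)"
proof -
  let ?H = "Hn c l R (n+1)" and ?\<Lambda> = "R powr (3/t^2)"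
  have Cn: "P \<in> Cn s \<theta> c l R Lf n" "P' \<in> Cn s \<theta> c l R Lf n" using P Cnk_subset_Cn by blast+
  then have "P \<in> Ccal s \<theta> c" "P' \<in> Ccal s \<theta> c" unfolding Cn_def by auto
  note D = Ccal_line_data[OF this(1) P_eq(1) L(1)] and D' = Ccal_line_data[OF this(2) P_eq(2) L(2)]
  have qB: "q*B < ?H" "?H/R \<le> q'*B'" "q'*B' < ?H"
    using Cn_qB_bounds[OF Cn(1)] Cn_qB_bounds[OF Cn(2)] P_eq L unfolding qof_def Bof_def by auto
  have \<Lambda>: "1 \<le> ?\<Lambda>" using R_ge t_pos by (simp add: ge_one_powr_ge_zero)
  have B_ratio: "B \<le> ?\<Lambda> * B'" "B' \<le> ?\<Lambda> * B"
    using Cnk_1_B_ratio[OF P] Cnk_1_B_ratio[OF P(2) P(1)] unfolding L Bof_def by auto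
  show "q \<le> R * ?\<Lambda> * q'"
    using denominator_ratio_bound[of q' B R ?\<Lambda> q ?H B'] B_ratio qB D(1,4) D'(1) R_ge \<Lambda> by simp
  have "?\<Lambda>*B' \<le> R*?\<Lambda>*B'" using R_ge \<Lambda> D'(4) by simp
  then show "B \<le> R * ?\<Lambda> * B'" using B_ratio(1) by linarith
  have "real_of_int q' * B \<le> ?\<Lambda>*(q'*B')"
    using B_ratio(1) D'(1) mult_left_mono[of B "?\<Lambda>*B'" q'] by (simp add: mult_ac)
  also have "\<dots> < ?\<Lambda> * ?H" using qB(3) \<Lambda> by (intro mult_strict_left_mono) auto
  finally show "real_of_int q' * B < ?\<Lambda> * ?H" .
qed

lemma Cnk_1_on_line:
  assumes P: "P \<in> Cnk s t \<theta> c l R Lf n 1" "P' \<in> Cnk s t \<theta> c l R Lf n 1"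
    and y: "y \<in> Delta t c P" "y' \<in> Delta t c P'"
    and close: "\<bar>y - y'\<bar> \<le> 4*c*R^2 / Hn c l R (n+1)"
    and L: "Lf P = (A, B, C)" and P': "P' = (p', q', r')"
  shows "B*r' = A*p' + C*q'"
proof -
  let ?H = "Hn c l R (n+1)" and ?\<Lambda> = "R powr (3/t^2)"
  obtain p q r where P_eq: "P = (p, q, r)" by (cases P)
  obtain A' B' C' where L': "Lf P' = (A', B', C')" by (cases "Lf P'")
  have "P \<in> Cn s \<theta> c l R Lf n" "P' \<in> Cn s \<theta> c l R Lf n" using P Cnk_subset_Cn by blast+
  then have "P \<in> Ccal s \<theta> c" "P' \<in> Ccal s \<theta> c" unfolding Cn_def by auto
  note D = Ccal_line_data[OF this(1) P_eq L] and D' = Ccal_line_data[OF this(2) P' L']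
  note scales = Cnk_1_scales[OF P P_eq P' L L'] and scales' = Cnk_1_scales[OF P(2,1) P' P_eq L' L]
  have \<Lambda>: "1 \<le> ?\<Lambda>" using R_ge t_pos by (simp add: ge_one_powr_ge_zero)
  have "real_of_int q' * B * \<bar>y - y'\<bar> \<le> ?\<Lambda> * ?H * (4*c*R^2 / ?H)"
    by (rule mult_mono[OF less_imp_le[OF scales(3)] close]) (use Hn_pos[of "n+1"] in auto)
  also have "\<dots> = 4*c*R^2*?\<Lambda>" using Hn_pos[of "n+1"] by simp
  finally have E: "real_of_int q' * B * \<bar>y - y'\<bar> \<le> 4*c*R^2*?\<Lambda>" .
  have y_near: "\<bar>y - r/q\<bar> < c / q powr (1+t)" "\<bar>y' - r'/q'\<bar> < c / q' powr (1+t)"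
    using y unfolding P_eq P' Delta_def by auto
  have pos: "real_of_int q > 0" "real_of_int q' > 0" "real_of_int B > 0" "real_of_int B' > 0"
    using D(1,4) D'(1,4) by simp_all
  have M: "1 \<le> R * ?\<Lambda>" using R_ge \<Lambda> mult_mono[of 1 R 1 ?\<Lambda>] by simp
  have s: "s \<le> 1" using s_plus_t t_pos by simp
  have "\<bar>real_of_int (A*p' + C*q' - B*r')\<bar> < 4*c*(R*?\<Lambda>) + 4*c*R^2*?\<Lambda>"
    using line_residual_bound[OF pos s_pos s D(7) D'(8) D'(3)
        near_line_value_at_theta[OF pos(1,3) D(3) D(6-8) y_near(1)] y_near(2) M scales(1)
        scales'(1) scales(2) E]
    by (simp add: mult.assoc)
  also have "\<dots> \<le> 8*c*R^2*?\<Lambda>"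
    using R_ge c_pos \<Lambda> by (simp add: power2_eq_square mult_right_mono)
  also have "\<dots> \<le> 1" using c_small by simp
  finally show ?thesis by linarith
qed

lemma Cnk_1_same_line:
  assumes P: "P \<in> Cnk s t \<theta> c l R Lf n 1" "P' \<in> Cnk s t \<theta> c l R Lf n 1"
    and y: "y \<in> Delta t c P" "y' \<in> Delta t c P'"
    and close: "\<bar>y - y'\<bar> \<le> 4*c*R^2 / Hn c l R (n+1)"
  shows "Lf P = Lf P'"
proof -
  obtain p q r p' q' r' where P_eq: "P = (p, q, r)" "P' = (p', q', r')" by (cases P, cases P')
  obtain A B C A' B' C' where L: "Lf P = (A, B, C)" "Lf P' = (A', B', C')"
    by (cases "Lf P", cases "Lf P'")
  have "P \<in> Cn s \<theta> c l R Lf n" "P' \<in> Cn s \<theta> c l R Lf n" using P Cnk_subset_Cn by blast+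
  then have "P \<in> Ccal s \<theta> c" "P' \<in> Ccal s \<theta> c" unfolding Cn_def by auto
  note D = Ccal_line_data[OF this(1) P_eq(1) L(1)] and D' = Ccal_line_data[OF this(2) P_eq(2) L(2)]
  have "\<bar>y' - y\<bar> \<le> 4*c*R^2 / Hn c l R (n+1)" using close by linarith
  then have "B*r' = A*p' + C*q'" "B'*r = A'*p + C'*q"
    using Cnk_1_on_line[OF P y close L(1) P_eq(2)] Cnk_1_on_line[OF P(2,1) y(2,1) _ L(2) P_eq(1)]
    by auto
  then show ?thesis
    using primitive_lines_eq_or_points_eq[OF D(1) D'(1) D(2) D'(2) D(4) D'(4) D(5) D'(5) D(9) _ _ D'(9)]
      P_eq L by auto
qed

lemma Cnk_B_range:
  assumes "2 \<le> k" "P \<in> Cnk s t \<theta> c l R Lf n k"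
  defines "G \<equiv> Hn c l R (n+1) powr (1/(1+t))" and "\<mu> \<equiv> 1/(t*(1+t))"
    and "w \<equiv> 3/t^2 + (real k - 2) * (1/(t*(1+t)))"
  shows "G powr t * R powr (-w-\<mu>) \<le> Bof (Lf P)" "Bof (Lf P) < G powr t * R powr (-w)"
proof -
  have "G powr t = Hn c l R (n+1) powr (t/(1+t))" unfolding G_def by (simp add: powr_powr)
  moreover have "\<And>x. - (3/t^2) - (real k - 1) * x = -(3/t^2 + (real k - 2) * x) - x"
    "\<And>x. - (3/t^2) - (real k - 2) * x = -(3/t^2 + (real k - 2) * x)"
    by (simp_all add: algebra_simps)
  then have "- (3/t^2) - (real k - 1) * (1/(t*(1+t))) = -w-\<mu>"
    "- (3/t^2) - (real k - 2) * (1/(t*(1+t))) = -w"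
    unfolding w_def \<mu>_def by blast+
  ultimately show "G powr t * R powr (-w-\<mu>) \<le> Bof (Lf P)" "Bof (Lf P) < G powr t * R powr (-w)"
    using assms(1,2) unfolding Cnk_def Let_def by auto
qed

lemma Cnk_close_line_pair:
  assumes k: "2 \<le> k" and P: "P \<in> Cnk s t \<theta> c l R Lf n k" "P' \<in> Cnk s t \<theta> c l R Lf n k"
    and y: "y \<in> Delta t c P" "y' \<in> Delta t c P'"
    and close: "\<bar>y - y'\<bar> \<le> 4*c*R powr (real k + 1) / Hn c l R (n+1)"
    and P_eq: "P = (p, q, r)" "P' = (p', q', r')" and L: "Lf P = (A, B, C)" "Lf P' = (A', B', C')"
  defines "H \<equiv> Hn c l R (n+1)"
  defines "G \<equiv> H powr (1/(1+t))" and "\<mu> \<equiv> 1/(t*(1+t))"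
    and "w \<equiv> 3/t^2 + (real k - 2) * (1/(t*(1+t)))"
  shows "close_line_pair q B A C q' B' A' C' y y' \<theta> c s t R H G w \<mu> k"
proof -
  have "P \<in> Cn s \<theta> c l R Lf n" "P' \<in> Cn s \<theta> c l R Lf n" using P Cnk_subset_Cn by blast+
  note qB = Cn_qB_bounds[OF this(1)] Cn_qB_bounds[OF this(2)]
  have "P \<in> Ccal s \<theta> c" "P' \<in> Ccal s \<theta> c" using \<open>P \<in> Cn _ _ _ _ _ _ _\<close> \<open>P' \<in> Cn _ _ _ _ _ _ _\<close>
    unfolding Cn_def by auto
  note D = Ccal_line_data[OF this(1) P_eq(1) L(1)] and D' = Ccal_line_data[OF this(2) P_eq(2) L(2)]
  have qB': "H/R \<le> q*B" "q*B < H" "H/R \<le> q'*B'" "q'*B' < H"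
    using qB P_eq L unfolding H_def qof_def Bof_def by auto
  have "1 \<le> q*B" using D(1,4) by (simp add: int_one_le_iff_zero_less)
  then have H: "1 \<le> H" using qB'(2) by linarith
  then have G: "1 \<le> G" unfolding G_def using t_pos by (simp add: ge_one_powr_ge_zero)
  have HG: "H = G powr (1+t)" unfolding G_def using H t_pos by (simp add: powr_powr)
  have B_range: "G powr t * R powr (-w-\<mu>) \<le> B" "B < G powr t * R powr (-w)"
    "G powr t * R powr (-w-\<mu>) \<le> B'" "B' < G powr t * R powr (-w)"
    using Cnk_B_range[OF k P(1)] Cnk_B_range[OF k P(2)] L
    unfolding G_def H_def \<mu>_def w_def Bof_def by auto
  have exps: "(1+t)*(s*\<mu> - t*w) \<le> -real k - 4" "real k + 4 \<le> 2*w"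
    using level_exponents[OF s_pos t_pos s_plus_t, of "real k"] k unfolding \<mu>_def w_def by auto
  have "8*c*R^2 * 1 \<le> 8*c*R^2 * R powr (3/t^2)"
    using c_pos R_ge t_pos by (intro mult_left_mono) (auto simp: ge_one_powr_ge_zero)
  then have c_small': "8*c*R^2 \<le> 1" using c_small by linarith
  have y_near: "\<bar>y - r/q\<bar> < c / q powr (1+t)" "\<bar>y' - r'/q'\<bar> < c / q' powr (1+t)"
    using y unfolding P_eq Delta_def by auto
  have pos: "real_of_int q > 0" "real_of_int q' > 0" "real_of_int B > 0" "real_of_int B' > 0"
    using D(1,4) D'(1,4) by simp_all
  show ?thesis
  proof
    show "\<bar>y - (A*\<theta> + C)/B\<bar> < 2*c/(real_of_int q * B)"
      and "\<bar>y' - (A'*\<theta> + C')/B'\<bar> < 2*c/(real_of_int q' * B')"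
      using near_line_value_at_theta[OF pos(1,3) D(3) D(6-8) y_near(1)]
        near_line_value_at_theta[OF pos(2,4) D'(3) D'(6-8) y_near(2)] by simp_all
  qed (use pos c_pos s_pos t_pos s_plus_t D(7) D'(7) close R_ge G HG qB' B_range exps c_small'
      in \<open>simp_all add: H_def\<close>)
qed

lemma Cnk_same_line_or_earlier_point:
  assumes k: "2 \<le> k" "k \<le> n" and P: "P \<in> Cnk s t \<theta> c l R Lf n k" "P' \<in> Cnk s t \<theta> c l R Lf n k"
    and y: "y \<in> Delta t c P" "y' \<in> Delta t c P'"
    and close: "\<bar>y - y'\<bar> \<le> 4*c*R powr (real k + 1) / Hn c l R (n+1)"
  shows "Lf P = Lf P' \<or> (\<exists>j\<in>{1..n-k}. \<exists>P2 \<in> Cn s \<theta> c l R Lf j. y \<in> Delta t c P2)"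
proof -
  obtain p q r p' q' r' where P_eq: "P = (p, q, r)" "P' = (p', q', r')" by (cases P, cases P')
  obtain A B C A' B' C' where L: "Lf P = (A, B, C)" "Lf P' = (A', B', C')"
    by (cases "Lf P", cases "Lf P'")
  have "P \<in> Cn s \<theta> c l R Lf n" "P' \<in> Cn s \<theta> c l R Lf n" using P Cnk_subset_Cn by blast+
  then have "P \<in> Ccal s \<theta> c" "P' \<in> Ccal s \<theta> c" unfolding Cn_def by auto
  note D = Ccal_line_data[OF this(1) P_eq(1) L(1)] and D' = Ccal_line_data[OF this(2) P_eq(2) L(2)]
  interpret pair: close_line_pair q B A C q' B' A' C' y y' \<theta> c s t R "Hn c l R (n+1)"
      "Hn c l R (n+1) powr (1/(1+t))" "3/t^2 + (real k - 2) * (1/(t*(1+t)))" "1/(t*(1+t))" k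
    by (rule Cnk_close_line_pair[OF k(1) P y close P_eq L])
  show ?thesis
  proof (cases "A*B' - A'*B = 0")
    case True
    then have "real_of_int A * real_of_int B' - real_of_int A' * real_of_int B = 0"
      by (metis of_int_0 of_int_diff of_int_mult)
    then have "\<bar>real_of_int (C*B' - C'*B)\<bar> < 1" using pair.det_lt_1 by simp
    then have "C*B' - C'*B = 0" by linarith
    then have "(A, B, C) = (A', B', C')"
      using primitive_triple_eqI[OF D(4) D'(4) D(5) D'(5)] True by simp
    then show ?thesis using L by simp
  next
    case False
    then have "real_of_int A * real_of_int B' - real_of_int A' * real_of_int B \<noteq> 0"
      by (metis of_int_eq_0_iff of_int_diff of_int_mult)
    note est = pair.intersection_close[OF this]
    have "\<bar>real_of_int (A*B' - A'*B)\<bar> powr (1+t) < Hn c l R (n-k+1)"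
      using est(3) Hn_shift[OF k(2)] by simp
    then show ?thesis
      using intersection_in_earlier_level[OF False, of "C*B' - C'*B" y "A*C' - A'*C" "n-k"] est(1,2)
      by simp
  qed
qed

end

theorem lemma4p2:
  fixes s t \<theta> \<beta> a0 b0 :: real
    and Lf :: "int \<times> int \<times> int \<Rightarrow> int \<times> int \<times> int"
    and I :: "nat list \<Rightarrow> real set"
    and n k :: nat and \<tau> :: "nat list"
  defines "R \<equiv> Rpar \<beta>"
  defines "l \<equiv> b0 - a0"
  defines "c \<equiv> cpar s t \<theta> l R"
  defines "m \<equiv> nat \<lfloor>R\<rfloor>"
  assumes st: "s > 0" "t > 0" "s + t = 1"
    and dioph: "dioph_const s \<theta> > 0"
    and beta: "0 < \<beta>" "\<beta> < 1"
    and A0: "a0 < b0"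
    and Lf_prop: "\<forall>P \<in> Ccal s \<theta> c. case P of (p, q, r) \<Rightarrow> case Lf P of (A, B, C) \<Rightarrow>
                   line_ok (A, B, C) \<and> on_line (A, B, C) (p, q, r) \<and>
                   real_of_int \<bar>A\<bar> \<le> of_int q powr s \<and> real_of_int B \<le> of_int q powr t"
    and I_int: "\<forall>v \<in> tree_verts m. \<exists>a b. a \<le> b \<and> I v = {a..b} \<and>
                   b - a = l * R powr (- real (length v))"
    and I_sub: "\<forall>v \<in> tree_verts m. I v \<subseteq> {a0..b0}"
    and I_inj: "inj_on I (tree_verts m)"
    and I_mono: "\<forall>v \<in> tree_verts m. \<forall>w. v @ w \<in> tree_verts m \<longrightarrow> I (v @ w) \<subseteq> I v"
    and I_disj: "\<forall>v \<in> tree_verts m. \<forall>i<m. \<forall>j<m. i \<noteq> j \<longrightarrow>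
                   interior (I (v @ [i])) \<inter> interior (I (v @ [j])) = {}"
    and I_conn: "\<forall>v \<in> tree_verts m. connected (\<Union>i<m. I (v @ [i]))"
    and nk: "1 \<le> n" "1 \<le> k" "k \<le> n"
    and tau: "\<tau> \<in> Sset m (\<lambda>j. \<Union>P \<in> Cn s \<theta> c l R Lf j. Delta t c P) I (n - k)"
  shows "\<forall>P \<in> Cnk s t \<theta> c l R Lf n k. \<forall>P' \<in> Cnk s t \<theta> c l R Lf n k.
           I \<tau> \<inter> Delta t c P \<noteq> {} \<longrightarrow> I \<tau> \<inter> Delta t c P' \<noteq> {} \<longrightarrow> Lf P = Lf P'"
proof -
  have R: "R \<ge> 16" unfolding R_def using beta by (rule Rpar_ge_16)
  interpret rational_approx_setting s t \<theta> c l R Lf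
    by unfold_locales (use st R A0 dioph Lf_prop in \<open>auto simp: c_def cpar_def l_def\<close>)
  note \<tau> = Sset_vertex[OF I_mono tau]
  obtain a b where I_\<tau>: "I \<tau> = {a..b}" "b - a = 4*c*R powr (real k + 1) / Hn c l R (n+1)"
    using I_int \<tau>(1,2) interval_length[OF nk(3)] by force
  show ?thesis
  proof (intro ballI impI)
    fix P P' assume P: "P \<in> Cnk s t \<theta> c l R Lf n k" "P' \<in> Cnk s t \<theta> c l R Lf n k"
      and "I \<tau> \<inter> Delta t c P \<noteq> {}" "I \<tau> \<inter> Delta t c P' \<noteq> {}"
    then obtain y y' where y: "y \<in> I \<tau>" "y \<in> Delta t c P" "y' \<in> I \<tau>" "y' \<in> Delta t c P'"
      by blast
    then have close: "\<bar>y - y'\<bar> \<le> 4*c*R powr (real k + 1) / Hn c l R (n+1)" using I_\<tau> by auto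
    show "Lf P = Lf P'"
    proof (cases "k = 1")
      case True
      then show ?thesis using Cnk_1_same_line[of P n P' y y'] P y(2,4) close R by (simp add: powr_numeral)
    next
      case False
      then have "2 \<le> k" using nk by simp
      from Cnk_same_line_or_earlier_point[OF this nk(3) P y(2,4) close] \<tau>(3) y(1)
      show ?thesis by blast
    qed
  qed
qed

end
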